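(* Let $G$ be a connected graph and let $v \in V(G)$. Then (1) $\left\lceil \frac{\tau(G)+1}{2} \right\rceil \le \tau(v) \le \tau(G)$; (2) there are at most $\left\lceil \frac{\tau(G)}{2} \right\rceil$ distinct terms in the detour sequence of $G$.
   Context: All graphs are finite and simple. The order of a path is its number of vertices. For a vertex $v$ of a graph $G$, the detour order $\tau(v)=\tau_G(v)$ is the order of a longest path in $G$ having $v$ as an endvertex. The detour order $\tau(G)$ of $G$ is the maximum of $\tau(v)$ over $v\in V(G)$, i.e. the order of a longest path in $G$. The detour sequence of $G$ is the nondecreasing sequence formed by the values $\tau(v)$, $v \in V(G)$ (one term per vertex). *)

theory Defs
  imports Complex_Main "HOL-Library.Multiset"
begin

definition simple_graph :: "'a set \<Rightarrow> ('a \<Rightarrow> 'a \<Rightarrow> bool) \<Rightarrow> bool" where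
  "simple_graph V E \<longleftrightarrow> finite V \<and> (\<forall>u w. E u w \<longrightarrow> u \<in> V \<and> w \<in> V)
     \<and> (\<forall>u w. E u w \<longrightarrow> E w u) \<and> (\<forall>u. \<not> E u u)"

text \<open>A path is a nonempty list of distinct vertices, consecutive ones adjacent.
  Its order is its length (number of vertices).\<close>
definition is_path :: "'a set \<Rightarrow> ('a \<Rightarrow> 'a \<Rightarrow> bool) \<Rightarrow> 'a list \<Rightarrow> bool" where
  "is_path V E p \<longleftrightarrow> p \<noteq> [] \<and> distinct p \<and> set p \<subseteq> V
     \<and> (\<forall>i. Suc i < length p \<longrightarrow> E (p ! i) (p ! Suc i))"

definition connected_graph :: "'a set \<Rightarrow> ('a \<Rightarrow> 'a \<Rightarrow> bool) \<Rightarrow> bool" where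
  "connected_graph V E \<longleftrightarrow> simple_graph V E \<and> V \<noteq> {}
     \<and> (\<forall>u\<in>V. \<forall>w\<in>V. \<exists>p. is_path V E p \<and> hd p = u \<and> last p = w)"

definition detour_vertex :: "'a set \<Rightarrow> ('a \<Rightarrow> 'a \<Rightarrow> bool) \<Rightarrow> 'a \<Rightarrow> nat" where
  "detour_vertex V E v = Max {length p | p. is_path V E p \<and> (hd p = v \<or> last p = v)}"

definition detour_graph :: "'a set \<Rightarrow> ('a \<Rightarrow> 'a \<Rightarrow> bool) \<Rightarrow> nat" where
  "detour_graph V E = Max (detour_vertex V E ` V)"

definition detour_sequence :: "'a set \<Rightarrow> ('a \<Rightarrow> 'a \<Rightarrow> bool) \<Rightarrow> nat list" where
  "detour_sequence V E = sorted_list_of_multiset (image_mset (detour_vertex V E) (mset_set V))"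

end

theory Submission
  imports Defs
begin

text \<open>Let \<open>P\<close> be a longest path and \<open>v\<close> any vertex. By connectivity some path from \<open>v\<close>
  reaches \<open>P\<close>; let \<open>x\<close> be the first vertex of \<open>P\<close> on it. The vertex \<open>x\<close> cuts \<open>P\<close> into two
  subpaths starting at \<open>x\<close> whose orders add up to \<open>\<tau>(G) + 1\<close>, so the longer one has order at
  least \<open>(\<tau>(G) + 1)/2\<close>, and prefixing it with the way from \<open>v\<close> to \<open>x\<close> yields a path ending
  in \<open>v\<close> that is at least as long. Hence all detour orders lie in the interval
  \<open>[\<lceil>(\<tau>(G)+1)/2\<rceil>, \<tau>(G)]\<close>, which contains exactly \<open>\<lceil>\<tau>(G)/2\<rceil>\<close> integers.\<close>

lemma is_path_iff_successively:
  "is_path V E p \<longleftrightarrow> p \<noteq> [] \<and> distinct p \<and> set p \<subseteq> V \<and> successively E p"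
  unfolding is_path_def successively_conv_nth by blast

lemma is_path_rev:
  assumes "\<And>u w. E u w \<Longrightarrow> E w u" and "is_path V E p"
  shows "is_path V E (rev p)"
  using assms unfolding is_path_iff_successively by (auto elim: successively_mono)

lemma is_path_appendD:
  assumes "is_path V E (p @ q)"
  shows "p \<noteq> [] \<Longrightarrow> is_path V E p" and "q \<noteq> [] \<Longrightarrow> is_path V E q"
  using assms by (auto simp: is_path_iff_successively successively_append_iff)

lemma is_path_glue:
  assumes "is_path V E (p @ [x])" and "is_path V E (x # q)" and "set p \<inter> set (x # q) = {}"
  shows "is_path V E (p @ x # q)"
proof -
  have "p @ x # q = (p @ [x]) @ q" by simp
  then show ?thesis using assms unfolding is_path_iff_successively
    by (auto simp: successively_append_iff successively_Cons)
qed

lemma long_path_from_path_to_path: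
  assumes sym: "\<And>u w. E u w \<Longrightarrow> E w u"
    and P: "is_path V E P" and q: "is_path V E q" and "last q \<in> set P"
  shows "\<exists>p. is_path V E p \<and> hd p = hd q \<and> length P + 1 \<le> 2 * length p"
proof -
  have "\<exists>x\<in>set q. x \<in> set P"
    using q \<open>last q \<in> set P\<close> by (auto simp: is_path_def)
  then obtain a x c where q_split: "q = a @ x # c" and "x \<in> set P"
    and a_off_P: "\<forall>y\<in>set a. y \<notin> set P"
    using split_list_first_prop[of q "\<lambda>y. y \<in> set P"] by blast
  have a_x: "is_path V E (a @ [x])"
    using q is_path_appendD(1)[of V E "a @ [x]" c] by (simp add: q_split)
  obtain P1 P2 where P_split: "P = P1 @ x # P2"
    using split_list[OF \<open>x \<in> set P\<close>] by blast
  have suffix: "is_path V E (x # P2)"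
    using P is_path_appendD(2)[of V E P1 "x # P2"] by (simp add: P_split)
  have reversed_prefix: "is_path V E (x # rev P1)"
    using is_path_rev[of E V "P1 @ [x]"] sym P is_path_appendD(1)[of V E "P1 @ [x]" P2]
    by (simp add: P_split)
  obtain b where b: "is_path V E (x # b)" "set b \<subseteq> set P"
    and long: "length P + 1 \<le> 2 * length (x # b)"
  proof (cases "length P1 \<le> length P2")
    case True
    then show ?thesis
      using that[OF suffix] by (auto simp: P_split)
  next
    case False
    then show ?thesis
      using that[OF reversed_prefix] by (auto simp: P_split)
  qed
  have "set a \<inter> set (x # b) = {}"
    using a_off_P b(2) \<open>x \<in> set P\<close> by auto
  then have "is_path V E (a @ x # b)"
    by (rule is_path_glue[OF a_x b(1)])
  moreover have "hd (a @ x # b) = hd q"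
    by (cases a) (simp_all add: q_split)
  ultimately show ?thesis
    using long by (intro exI[of _ "a @ x # b"]) simp
qed

lemma is_path_length_le_card:
  assumes "finite V" and "is_path V E p"
  shows "length p \<le> card V"
proof -
  have "length p = card (set p)"
    using assms by (simp add: is_path_def distinct_card)
  also have "\<dots> \<le> card V"
    using assms by (intro card_mono) (auto simp: is_path_def)
  finally show ?thesis .
qed

lemma finite_path_lengths:
  assumes "finite V"
  shows "finite {length p | p. is_path V E p \<and> (hd p = v \<or> last p = v)}"
  by (rule finite_subset[of _ "{..card V}"]) (auto dest: is_path_length_le_card[OF assms])

lemma length_le_detour_vertex:
  assumes "finite V" and "is_path V E p" and "hd p = v \<or> last p = v"
  shows "length p \<le> detour_vertex V E v"
  unfolding detour_vertex_def using assms by (intro Max_ge finite_path_lengths) auto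

lemma detour_vertex_attained:
  assumes "finite V" and "v \<in> V"
  obtains p where "is_path V E p" and "length p = detour_vertex V E v"
proof -
  let ?lengths = "{length p | p. is_path V E p \<and> (hd p = v \<or> last p = v)}"
  have "is_path V E [v]"
    using assms by (simp add: is_path_def)
  then have "length [v] \<in> ?lengths"
    by fastforce
  then have "detour_vertex V E v \<in> ?lengths"
    unfolding detour_vertex_def by (intro Max_in[OF finite_path_lengths[OF assms(1)]]) blast
  then obtain p where "is_path V E p" and "detour_vertex V E v = length p"
    by blast
  then show ?thesis
    using that by simp
qed

lemma detour_vertex_le_detour_graph:
  assumes "finite V" and "v \<in> V"
  shows "detour_vertex V E v \<le> detour_graph V E"
  unfolding detour_graph_def by (intro Max_ge finite_imageI imageI assms)

lemma longest_path_exists: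
  assumes "finite V" and "V \<noteq> {}"
  obtains P where "is_path V E P" and "length P = detour_graph V E"
proof -
  have "detour_graph V E \<in> detour_vertex V E ` V"
    unfolding detour_graph_def using assms by (intro Max_in finite_imageI) simp_all
  then obtain w where "w \<in> V" and "detour_graph V E = detour_vertex V E w"
    by blast
  then show ?thesis
    using detour_vertex_attained[OF assms(1) \<open>w \<in> V\<close>] that by metis
qed

lemma detour_graph_le_detour_vertex:
  assumes G: "connected_graph V E" and "v \<in> V"
  shows "detour_graph V E + 1 \<le> 2 * detour_vertex V E v"
proof -
  have "finite V" and "V \<noteq> {}" and sym: "\<And>u w. E u w \<Longrightarrow> E w u"
    using G unfolding connected_graph_def simple_graph_def by blast+
  obtain P where P: "is_path V E P" "length P = detour_graph V E"
    using longest_path_exists[OF \<open>finite V\<close> \<open>V \<noteq> {}\<close>] by blast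
  have "hd P \<in> V" and "hd P \<in> set P"
    using P(1) by (auto simp: is_path_def)
  moreover have "\<forall>u\<in>V. \<forall>w\<in>V. \<exists>p. is_path V E p \<and> hd p = u \<and> last p = w"
    using G by (simp add: connected_graph_def)
  ultimately obtain q where q: "is_path V E q" "hd q = v" "last q \<in> set P"
    using \<open>v \<in> V\<close> by metis
  obtain p where p: "is_path V E p" "hd p = v" "length P + 1 \<le> 2 * length p"
    using long_path_from_path_to_path[OF sym P(1) q(1) q(3)] q(2) by blast
  have "length p \<le> detour_vertex V E v"
    using length_le_detour_vertex[OF \<open>finite V\<close> p(1)] p(2) by blast
  then show ?thesis
    using P(2) p(3) by linarith
qed

lemma set_detour_sequence:
  assumes "finite V"
  shows "set (detour_sequence V E) = detour_vertex V E ` V"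
  unfolding detour_sequence_def using assms by simp

lemma card_set_detour_sequence_le:
  assumes G: "connected_graph V E"
  shows "card (set (detour_sequence V E)) \<le> (detour_graph V E + 1) div 2"
proof -
  let ?T = "detour_graph V E"
  have "finite V"
    using G by (simp add: connected_graph_def simple_graph_def)
  have "detour_vertex V E ` V \<subseteq> {(?T + 2) div 2 .. ?T}"
    using detour_graph_le_detour_vertex[OF G] detour_vertex_le_detour_graph[OF \<open>finite V\<close>]
    by force
  then have "card (detour_vertex V E ` V) \<le> card {(?T + 2) div 2 .. ?T}"
    by (intro card_mono) auto
  then show ?thesis
    using set_detour_sequence[OF \<open>finite V\<close>] by simp
qed

lemma nat_ceiling_half: "nat \<lceil>real n / 2\<rceil> = (n + 1) div 2"
proof (cases "even n")
  case True
  then show ?thesis by (auto elim: evenE)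
next
  case False
  then obtain k where "n = 2 * k + 1"
    by (blast elim: oddE)
  moreover have "\<lceil>real (2 * k + 1) / 2\<rceil> = int k + 1"
    by (rule ceiling_unique) (auto simp: field_simps)
  ultimately show ?thesis by simp
qed

theorem lemma1p4:
  fixes V :: "'a set" and E :: "'a \<Rightarrow> 'a \<Rightarrow> bool" and v :: 'a
  assumes "connected_graph V E" and "v \<in> V"
  shows "\<lceil>(real (detour_graph V E) + 1) / 2\<rceil> \<le> int (detour_vertex V E v)
         \<and> detour_vertex V E v \<le> detour_graph V E
         \<and> card (set (detour_sequence V E)) \<le> nat \<lceil>real (detour_graph V E) / 2\<rceil>"
proof (intro conjI)
  have "finite V"
    using assms(1) by (simp add: connected_graph_def simple_graph_def)
  show "\<lceil>(real (detour_graph V E) + 1) / 2\<rceil> \<le> int (detour_vertex V E v)"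
    using detour_graph_le_detour_vertex[OF assms] by (simp add: ceiling_le_iff)
  show "detour_vertex V E v \<le> detour_graph V E"
    using detour_vertex_le_detour_graph[OF \<open>finite V\<close> assms(2)] .
  show "card (set (detour_sequence V E)) \<le> nat \<lceil>real (detour_graph V E) / 2\<rceil>"
    using card_set_detour_sequence_le[OF assms(1)] by (simp only: nat_ceiling_half)
qed

end
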